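(* Let $\tau>0$ and let $u_\tau$ be a continuous periodic solution of the discrete Lax--Oleinik equation with constant $\bar L(\tau)$. For every $(x,v)\in\widetilde{\mathcal A}^{\tau}_L$ there exists a bi-infinite sequence $\{x_k\}_{k\in\mathbb{Z}}$ such that $x_0=x$, $x_1=x+\tau v$, and for all integers $m<n$, \[ u_\tau(x_n)-u_\tau(x_m)=\sum_{j=m}^{n-1}\mathcal L_\tau(x_j,x_{j+1})-(n-m)\tau\bar L(\tau). \]
   Context: $\mathbb{T}^d=\mathbb{R}^d/\mathbb{Z}^d$; functions on $\mathbb{T}^d$ are identified with $\mathbb{Z}^d$-periodic functions on $\mathbb{R}^d$. $H$ is a Tonelli Hamiltonian on $\mathbb{T}^d\times\mathbb{R}^d$ ($C^2$, $D^2_{pp}H>0$, superlinear in $p$ uniformly in $x$) and $L(x,v)=\sup_p\{p\cdot v-H(x,p)\}$ its Legendre transform. For $\tau>0$, $\mathcal L_\tau(x,y):=\tau L(x,\frac{y-x}{\tau})$. The discrete Lax--Oleinik equation is $u_\tau(y)+\bar L(\tau)\tau=\inf_{x\in\mathbb{R}^d}(u_\tau(x)+\mathcal L_\tau(x,y))$ for all $y$; it is known that there is a unique constant $\bar L(\tau)$ for which a continuous periodic solution $u_\tau$ exists, and such solutions are Lipschitz. A calibrated configuration for $u_\tau(x)$ is a sequence $\{x_{-k}\}_{k\ge0}$ with $x_0=x$ and $u_\tau(x_{-k})+\tau\bar L(\tau)=u_\tau(x_{-k-1})+\mathcal L_\tau(x_{-k-1},x_{-k})$ for all $k\ge0$.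 Define $\widetilde\Sigma^\tau_L:=\{(x,v)\in\mathbb{T}^d\times\mathbb{R}^d:$ there is a calibrated configuration $\{x_{-k}\}_{k\ge0}$ for $u_\tau(x+\tau v)$ with $x_{-1}=x$, $(x_0-x_{-1})/\tau=v\}$. For $n\in\mathbb{N}$ and $(x,v)$, let $\Psi^n_{L,\tau}(x,v)$ be the set of points $\bigl(x_{-n-1},\frac{x_{-n}-x_{-n-1}}{\tau}\bigr)$ over all calibrated configurations $\{x_{-k}\}_{k\ge0}$ for $u_\tau(x+\tau v)$ with $x_{-1}=x$ and $v=(x_0-x_{-1})/\tau$; for a set $S$, $\Psi^n_{L,\tau}(S)$ is the union of $\Psi^n_{L,\tau}(z)$ over $z\in S$. The discrete Aubry set is $\widetilde{\mathcal A}^\tau_L:=\bigcap_{n\in\mathbb{N}}\Psi^n_{L,\tau}(\widetilde\Sigma^\tau_L)$. *)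

theory Defs
  imports "HOL-Analysis.Analysis"
begin

text \<open>Points of the torus are represented by points of real^'d (Z^d-periodic lifts).\<close>

definition int_shift :: "int ^ 'd \<Rightarrow> real ^ 'd" where
  "int_shift k = (\<chi> i. real_of_int (k $ i))"

definition zd_periodic :: "(real ^ 'd \<Rightarrow> 'b) \<Rightarrow> bool" where
  "zd_periodic u \<longleftrightarrow> (\<forall>x k. u (x + int_shift k) = u x)"

definition tonelli :: "((real ^ 'd) \<times> (real ^ 'd) \<Rightarrow> real) \<Rightarrow> bool" where
  "tonelli H \<longleftrightarrow>
     (\<exists>DH DDH.
        (\<forall>z. (H has_derivative blinfun_apply (DH z)) (at z)) \<and>
        (\<forall>z. (DH has_derivative blinfun_apply (DDH z)) (at z)) \<and>
        continuous_on UNIV DDH \<and>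
        (\<forall>x p w. w \<noteq> 0 \<longrightarrow>
            blinfun_apply (blinfun_apply (DDH (x, p)) (0, w)) (0, w) > 0)) \<and>
     (\<forall>x p k. H (x + int_shift k, p) = H (x, p)) \<and>
     (\<forall>A. \<exists>B. \<forall>x p. H (x, p) \<ge> A * norm p - B)"

definition lagrangian :: "((real ^ 'd) \<times> (real ^ 'd) \<Rightarrow> real) \<Rightarrow> real ^ 'd \<Rightarrow> real ^ 'd \<Rightarrow> real" where
  "lagrangian H x v = (SUP p. inner p v - H (x, p))"

definition Ltau :: "(real ^ 'd \<Rightarrow> real ^ 'd \<Rightarrow> real) \<Rightarrow> real \<Rightarrow> real ^ 'd \<Rightarrow> real ^ 'd \<Rightarrow> real" where
  "Ltau L \<tau> x y = \<tau> * L x ((1 / \<tau>) *\<^sub>R (y - x))"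

text \<open>u solves the discrete Lax--Oleinik equation with constant c (= Lbar(tau)).\<close>

definition discrete_LO_solution ::
  "(real ^ 'd \<Rightarrow> real ^ 'd \<Rightarrow> real) \<Rightarrow> real \<Rightarrow> real \<Rightarrow> (real ^ 'd \<Rightarrow> real) \<Rightarrow> bool" where
  "discrete_LO_solution L \<tau> c u \<longleftrightarrow>
     (\<forall>y. u y + c * \<tau> = (INF x. u x + Ltau L \<tau> x y))"

text \<open>Calibrated configuration for u(x): xs k stands for x_{-k}.\<close>

definition calibrated ::
  "(real ^ 'd \<Rightarrow> real ^ 'd \<Rightarrow> real) \<Rightarrow> real \<Rightarrow> real \<Rightarrow> (real ^ 'd \<Rightarrow> real)
     \<Rightarrow> real ^ 'd \<Rightarrow> (nat \<Rightarrow> real ^ 'd) \<Rightarrow> bool" where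
  "calibrated L \<tau> c u x xs \<longleftrightarrow> xs 0 = x \<and>
     (\<forall>k. u (xs k) + \<tau> * c = u (xs (Suc k)) + Ltau L \<tau> (xs (Suc k)) (xs k))"

definition Sigma_tau ::
  "(real ^ 'd \<Rightarrow> real ^ 'd \<Rightarrow> real) \<Rightarrow> real \<Rightarrow> real \<Rightarrow> (real ^ 'd \<Rightarrow> real)
     \<Rightarrow> ((real ^ 'd) \<times> (real ^ 'd)) set" where
  "Sigma_tau L \<tau> c u = {(x, v). \<exists>xs. calibrated L \<tau> c u (x + \<tau> *\<^sub>R v) xs \<and> xs 1 = x
       \<and> (1 / \<tau>) *\<^sub>R (xs 0 - xs 1) = v}"

definition Psi_tau ::
  "(real ^ 'd \<Rightarrow> real ^ 'd \<Rightarrow> real) \<Rightarrow> real \<Rightarrow> real \<Rightarrow> (real ^ 'd \<Rightarrow> real) \<Rightarrow> nat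
     \<Rightarrow> (real ^ 'd) \<times> (real ^ 'd) \<Rightarrow> ((real ^ 'd) \<times> (real ^ 'd)) set" where
  "Psi_tau L \<tau> c u n z = {(xs (Suc n), (1 / \<tau>) *\<^sub>R (xs n - xs (Suc n))) | xs.
       calibrated L \<tau> c u (fst z + \<tau> *\<^sub>R snd z) xs \<and> xs 1 = fst z
       \<and> snd z = (1 / \<tau>) *\<^sub>R (xs 0 - xs 1)}"

definition Psi_tau_set ::
  "(real ^ 'd \<Rightarrow> real ^ 'd \<Rightarrow> real) \<Rightarrow> real \<Rightarrow> real \<Rightarrow> (real ^ 'd \<Rightarrow> real) \<Rightarrow> nat
     \<Rightarrow> ((real ^ 'd) \<times> (real ^ 'd)) set \<Rightarrow> ((real ^ 'd) \<times> (real ^ 'd)) set" where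
  "Psi_tau_set L \<tau> c u n S = (\<Union>z\<in>S. Psi_tau L \<tau> c u n z)"

definition discrete_Aubry ::
  "(real ^ 'd \<Rightarrow> real ^ 'd \<Rightarrow> real) \<Rightarrow> real \<Rightarrow> real \<Rightarrow> (real ^ 'd \<Rightarrow> real)
     \<Rightarrow> ((real ^ 'd) \<times> (real ^ 'd)) set" where
  "discrete_Aubry L \<tau> c u = (\<Inter>n. Psi_tau_set L \<tau> c u n (Sigma_tau L \<tau> c u))"

end

theory Submission
  imports Defs
begin

text \<open>For every \<open>n\<close>, membership of \<open>(x, v)\<close> in the discrete Aubry set yields a calibrated
  configuration \<open>xs\<close> with \<open>xs (n + 1) = x\<close> and \<open>xs n = x + \<tau> v\<close>; read forwards, it is a
  calibrated chain of \<open>n + 1\<close> steps starting with \<open>x \<mapsto> x + \<tau> v\<close>. Since \<open>u\<close> is bounded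
  and \<open>L\<close> grows at least linearly, calibrated steps have bounded length, so a subsequence of
  these chains converges pointwise. The limit is again calibrated: \<open>u\<close> is dominated,
  \<open>u y - u x \<le> L\<^sub>\<tau>(x, y) - \<tau> c\<close>, so calibration is the inequality
  \<open>L\<^sub>\<tau>(x, y) \<le> u y - u x + \<tau> c\<close>, which is closed because \<open>L\<close> is a supremum of continuous
  functions. Prefixing the backward configuration for \<open>n = 0\<close> gives a bi-infinite calibrated
  chain, along which calibration telescopes to the action identity.\<close>

lemma tonelliD:
  assumes "tonelli H"
  shows tonelli_continuous: "continuous_on UNIV H"
    and tonelli_periodic: "\<And>x p k. H (x + int_shift k, p) = H (x, p)"
    and tonelli_superlinear: "\<And>A. \<exists>B. \<forall>x p. A * norm p - B \<le> H (x, p)"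
proof -
  obtain DH where "\<forall>z. (H has_derivative blinfun_apply (DH z)) (at z)"
    using assms unfolding tonelli_def by blast
  then show "continuous_on UNIV H"
    by (meson continuous_at_imp_continuous_on has_derivative_continuous)
qed (use assms in \<open>auto simp: tonelli_def\<close>)

lemma int_shift_into_unit_cube:
  fixes y :: "real ^ 'd"
  obtains k where "y + int_shift k \<in> cbox (vec 0) (vec 1)"
proof
  show "y + int_shift (\<chi> i. - \<lfloor>y $ i\<rfloor>) \<in> cbox (vec 0) (vec 1)"
    unfolding mem_box_cart int_shift_def by (auto simp: vec_nth_inverse) linarith
qed

lemma bounded_image_periodic_in_fst:
  fixes f :: "(real ^ 'd) \<times> 'a::topological_space \<Rightarrow> 'b::metric_space"
  assumes "continuous_on UNIV f" "compact K"
    and periodic: "\<And>x k p. f (x + int_shift k, p) = f (x, p)"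
  shows "bounded (f ` (UNIV \<times> K))"
proof -
  have "f ` (UNIV \<times> K) \<subseteq> f ` (cbox (vec 0) (vec 1) \<times> K)"
  proof clarify
    fix x :: "real ^ 'd" and p assume "p \<in> K"
    obtain k where "x + int_shift k \<in> cbox (vec 0) (vec 1)"
      using int_shift_into_unit_cube by blast
    with \<open>p \<in> K\<close> show "f (x, p) \<in> f ` (cbox (vec 0) (vec 1) \<times> K)"
      by (metis mem_Sigma_iff periodic rev_image_eqI)
  qed
  moreover have "compact (f ` (cbox (vec 0) (vec 1) \<times> K))"
    using assms(1,2) by (intro compact_continuous_image compact_Times compact_cbox)
      (auto intro: continuous_on_subset)
  ultimately show ?thesis
    using bounded_subset compact_imp_bounded by blast
qed

lemma bounded_range_zd_periodic:
  fixes u :: "real ^ 'd \<Rightarrow> 'b::metric_space"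
  assumes "continuous_on UNIV u" "zd_periodic u"
  shows "bounded (range u)"
proof -
  have "continuous_on UNIV (\<lambda>z::(real ^ 'd) \<times> real. u (fst z))"
    by (rule continuous_on_compose2[OF assms(1) _ subset_UNIV]) (intro continuous_intros)
  then have "bounded ((\<lambda>z. u (fst z)) ` (UNIV \<times> {0::real}))"
    using assms(2) by (intro bounded_image_periodic_in_fst) (auto simp: zd_periodic_def)
  moreover have "(\<lambda>z. u (fst z)) ` (UNIV \<times> {0::real}) = range u"
    by force
  ultimately show ?thesis by simp
qed

lemma tonelli_bounded_above_on_unit_ball:
  assumes "tonelli H"
  obtains M where "\<And>x p. norm p \<le> 1 \<Longrightarrow> H (x, p) \<le> M"
proof -
  have "bounded (H ` (UNIV \<times> cball 0 1))"
    by (rule bounded_image_periodic_in_fst[where K = "cball 0 1", OF tonelli_continuous[OF assms]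
          compact_cball tonelli_periodic[OF assms]])
  then obtain M where M: "\<And>z. z \<in> H ` (UNIV \<times> cball 0 1) \<Longrightarrow> \<bar>z\<bar> \<le> M"
    by (auto simp: bounded_iff)
  have "H (x, p) \<le> M" if "norm p \<le> 1" for x p
    using M[of "H (x, p)"] that by simp
  then show ?thesis
    by (rule that)
qed

lemma bdd_above_Legendre:
  assumes superlinear: "\<And>A. \<exists>B. \<forall>x p. A * norm p - B \<le> H (x, p)"
  shows "bdd_above (range (\<lambda>p. inner p v - H (x, p)))"
proof -
  obtain B where B: "\<And>x p. norm v * norm p - B \<le> H (x, p)"
    using superlinear by blast
  have "inner p v - H (x, p) \<le> B" for p
    using norm_cauchy_schwarz[of p v] B[where x = x and p = p] by (simp add: mult.commute)
  then show ?thesis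
    by (intro bdd_aboveI2)
qed

lemma lagrangian_ge:
  assumes "\<And>A. \<exists>B. \<forall>x p. A * norm p - B \<le> H (x, p)"
  shows "inner p v - H (x, p) \<le> lagrangian H x v"
  unfolding lagrangian_def by (rule cSUP_upper[OF UNIV_I bdd_above_Legendre[OF assms]])

lemma norm_minus_le_lagrangian:
  assumes "\<And>A. \<exists>B. \<forall>x p. A * norm p - B \<le> H (x, p)"
    and "\<And>x p. norm p \<le> 1 \<Longrightarrow> H (x, p) \<le> M"
  shows "norm v - M \<le> lagrangian H x v"
proof -
  have "inner (sgn v) v = norm v"
    by (cases "v = 0") (simp_all add: sgn_div_norm power2_norm_eq_inner[symmetric] power2_eq_square)
  moreover have "H (x, sgn v) \<le> M"
    using assms(2) by (simp add: norm_sgn)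
  ultimately show ?thesis
    using lagrangian_ge[OF assms(1), of "sgn v" v x] by linarith
qed

lemma norm_diff_minus_le_Ltau:
  assumes "\<And>x w. norm w - M \<le> L x w" "\<tau> > 0"
  shows "norm (y - x) - \<tau> * M \<le> Ltau L \<tau> x y"
proof -
  have "\<tau> * (norm ((1 / \<tau>) *\<^sub>R (y - x)) - M) \<le> Ltau L \<tau> x y"
    unfolding Ltau_def by (rule mult_left_mono[OF assms(1)]) (use assms(2) in simp)
  then show ?thesis
    using assms(2) by (simp add: right_diff_distrib)
qed

lemma discrete_LO_solution_dominated:
  assumes "discrete_LO_solution L \<tau> c u" "bdd_below (range u)" "\<And>x w. A \<le> L x w" "\<tau> \<ge> 0"
  shows "u y + \<tau> * c \<le> u x + Ltau L \<tau> x y"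
proof -
  obtain B where "\<And>x. B \<le> u x"
    using assms(2) by (auto simp: bdd_below_def)
  moreover have "\<tau> * A \<le> Ltau L \<tau> x y" for x
    unfolding Ltau_def using assms(3,4) by (simp add: mult_left_mono)
  ultimately have "bdd_below (range (\<lambda>x. u x + Ltau L \<tau> x y))"
    by (intro bdd_belowI2[where m = "B + \<tau> * A"]) (simp add: add_mono)
  then have "(INF x. u x + Ltau L \<tau> x y) \<le> u x + Ltau L \<tau> x y"
    by (rule cINF_lower) simp
  then show ?thesis
    using assms(1) by (simp add: discrete_LO_solution_def mult.commute)
qed

definition calibrated_pair ::
  "(real ^ 'd \<Rightarrow> real ^ 'd \<Rightarrow> real) \<Rightarrow> real \<Rightarrow> real \<Rightarrow> (real ^ 'd \<Rightarrow> real)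
     \<Rightarrow> real ^ 'd \<Rightarrow> real ^ 'd \<Rightarrow> bool" where
  "calibrated_pair L \<tau> c u x y \<longleftrightarrow> u y + \<tau> * c = u x + Ltau L \<tau> x y"

lemma calibrated_iff:
  "calibrated L \<tau> c u x xs \<longleftrightarrow> xs 0 = x \<and> (\<forall>k. calibrated_pair L \<tau> c u (xs (Suc k)) (xs k))"
  by (simp add: calibrated_def calibrated_pair_def)

lemma dist_le_if_calibrated_pair:
  assumes "calibrated_pair L \<tau> c u x y" "\<And>z. \<bar>u z\<bar> \<le> K" "\<And>z w. norm w - M \<le> L z w" "\<tau> > 0"
  shows "dist x y \<le> 2 * K + \<tau> * \<bar>c\<bar> + \<tau> * M"
proof -
  have "norm (y - x) - \<tau> * M \<le> u y - u x + \<tau> * c"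
    using norm_diff_minus_le_Ltau[where L = L and x = x and y = y, OF assms(3,4)] assms(1)
    by (simp add: calibrated_pair_def)
  moreover have "u y - u x \<le> 2 * K"
    using assms(2)[of x] assms(2)[of y] by linarith
  moreover have "\<tau> * c \<le> \<tau> * \<bar>c\<bar>"
    using assms(4) by (simp add: mult_left_mono)
  ultimately show ?thesis
    by (simp add: dist_norm norm_minus_commute)
qed

lemma closed_calibrated_pairs:
  fixes H :: "(real ^ 'd) \<times> (real ^ 'd) \<Rightarrow> real"
  assumes superlinear: "\<And>A. \<exists>B. \<forall>x p. A * norm p - B \<le> H (x, p)"
    and "continuous_on UNIV H" "continuous_on UNIV u" "\<tau> > 0"
    and LO: "\<And>x y. u y + \<tau> * c \<le> u x + Ltau (lagrangian H) \<tau> x y"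
  shows "closed {(x, y). calibrated_pair (lagrangian H) \<tau> c u x y}"
proof -
  let ?w = "\<lambda>z. (1 / \<tau>) *\<^sub>R (snd z - fst z)"
  let ?b = "\<lambda>z. (u (snd z) - u (fst z) + \<tau> * c) / \<tau>"
  have "calibrated_pair (lagrangian H) \<tau> c u (fst z) (snd z)
      \<longleftrightarrow> lagrangian H (fst z) (?w z) \<le> ?b z" for z
    using LO[where x = "fst z" and y = "snd z"] \<open>\<tau> > 0\<close>
    by (auto simp: calibrated_pair_def Ltau_def field_simps)
  also have "\<dots> z \<longleftrightarrow> (\<forall>p. inner p (?w z) - H (fst z, p) \<le> ?b z)" for z
    unfolding lagrangian_def
    by (subst cSUP_le_iff)
      (simp_all only: bdd_above_Legendre[OF superlinear] UNIV_not_empty ball_UNIV not_False_eq_True)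
  finally have "{(x, y). calibrated_pair (lagrangian H) \<tau> c u x y}
      = (\<Inter>p. {z. inner p (?w z) - H (fst z, p) \<le> ?b z})"
    by auto
  moreover have "closed {z. inner p (?w z) - H (fst z, p) \<le> ?b z}" for p
  proof -
    have "continuous_on UNIV (\<lambda>z :: (real ^ 'd) \<times> (real ^ 'd). H (fst z, p))"
      by (rule continuous_on_compose2[OF assms(2) _ subset_UNIV]) (intro continuous_intros)
    moreover have "continuous_on UNIV (\<lambda>z :: (real ^ 'd) \<times> (real ^ 'd). u (fst z))"
      "continuous_on UNIV (\<lambda>z :: (real ^ 'd) \<times> (real ^ 'd). u (snd z))"
      by (rule continuous_on_compose2[OF assms(3) _ subset_UNIV], intro continuous_intros)+
    ultimately show ?thesis
      using \<open>\<tau> > 0\<close> by (intro closed_Collect_le continuous_intros) auto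
  qed
  ultimately show ?thesis
    by (simp add: closed_INT)
qed

lemma discrete_Aubry_calibrated_configurations:
  assumes "(x, v) \<in> discrete_Aubry L \<tau> c u" "\<tau> \<noteq> 0"
  obtains ys where "\<And>n. ys n (Suc n) = x" "\<And>n. ys n n = x + \<tau> *\<^sub>R v"
    "\<And>n k. calibrated_pair L \<tau> c u (ys n (Suc k)) (ys n k)"
proof -
  have "\<exists>xs. xs (Suc n) = x \<and> xs n = x + \<tau> *\<^sub>R v
      \<and> (\<forall>k. calibrated_pair L \<tau> c u (xs (Suc k)) (xs k))" for n
  proof -
    from assms(1) obtain z where "(x, v) \<in> Psi_tau L \<tau> c u n z"
      unfolding discrete_Aubry_def Psi_tau_set_def by blast
    then obtain xs where xs: "x = xs (Suc n)" "v = (1 / \<tau>) *\<^sub>R (xs n - xs (Suc n))"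
      "calibrated L \<tau> c u (fst z + \<tau> *\<^sub>R snd z) xs"
      unfolding Psi_tau_def by blast
    moreover have "xs n = x + \<tau> *\<^sub>R v"
      using xs(1,2) assms(2) by simp
    ultimately show ?thesis
      by (auto simp: calibrated_iff)
  qed
  then show ?thesis
    using that by metis
qed

lemma pointwise_convergent_subseq:
  fixes w :: "nat \<Rightarrow> nat \<Rightarrow> 'a::heine_borel"
  assumes "\<And>j. compact (K j)" "\<And>n j. w n j \<in> K j"
  obtains l r where "strict_mono r" "\<And>j. (\<lambda>n. w (r n) j) \<longlonglongrightarrow> l j"
proof -
  have "compactin (product_topology (\<lambda>j. euclidean) UNIV) (PiE UNIV K)"
    using assms(1) by (simp add: compactin_PiE)
  then have "compact (PiE UNIV K)"
    by (simp only: euclidean_product_topology compactin_euclidean_iff)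
  moreover have "w n \<in> PiE UNIV K" for n
    using assms(2) by auto
  ultimately obtain l r where r: "strict_mono r" and lim: "(w \<circ> r) \<longlonglongrightarrow> l"
    using compact_imp_seq_compact seq_compactE by metis
  have "(\<lambda>n. w (r n) j) \<longlonglongrightarrow> l j" for j
  proof -
    have "continuous_on UNIV (\<lambda>f :: nat \<Rightarrow> 'a. f j)"
      by simp
    from continuous_on_tendsto_compose[OF this lim] show ?thesis
      by (simp add: o_def)
  qed
  with r show ?thesis
    by (rule that)
qed

lemma infinite_chain_from_finite_chains:
  fixes S :: "'a::heine_borel \<Rightarrow> 'a \<Rightarrow> bool"
  assumes closed: "closed {(y, z). S y z}"
    and step: "\<And>y z. S y z \<Longrightarrow> dist y z \<le> R"
    and chains: "\<And>n j. j < n \<Longrightarrow> S (w n j) (w n (Suc j))"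
    and start: "\<And>n. w n 0 = x"
  obtains l where "\<And>j. S (l j) (l (Suc j))" "\<And>j a. (\<And>n. w n j = a) \<Longrightarrow> l j = a"
proof -
  define v where "v n j = w n (min j n)" for n j
  have "dist (w 1 0) (w 1 1) \<le> R"
    using step[OF chains[of 0 1]] by simp
  then have "0 \<le> R"
    by (rule order_trans[OF zero_le_dist])
  have "v n j \<in> cball x (real j * R)" for n j
    unfolding mem_cball
  proof (induction j)
    case 0
    then show ?case by (simp add: v_def start)
  next
    case (Suc j)
    have "dist (v n j) (v n (Suc j)) \<le> R"
      using step[OF chains[of j n]] \<open>0 \<le> R\<close> by (cases "j < n") (simp_all add: v_def)
    then show ?case
      using Suc dist_triangle[of x "v n (Suc j)" "v n j"] by (simp add: algebra_simps)
  qed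
  then obtain l r where r: "strict_mono r" and lim_v: "\<And>j. (\<lambda>n. v (r n) j) \<longlonglongrightarrow> l j"
    using pointwise_convergent_subseq[of "\<lambda>j. cball x (real j * R)" v, OF compact_cball] by blast
  have eventually_long: "\<forall>\<^sub>F n in sequentially. j < r n" for j
    using eventually_gt_at_top[of j] by eventually_elim (rule less_le_trans[OF _ seq_suble[OF r]])
  have lim: "(\<lambda>n. w (r n) j) \<longlonglongrightarrow> l j" for j
  proof (rule Lim_transform_eventually[OF lim_v])
    show "\<forall>\<^sub>F n in sequentially. v (r n) j = w (r n) j"
      using eventually_long[of j] by eventually_elim (simp add: v_def)
  qed
  show ?thesis
  proof
    show "S (l j) (l (Suc j))" for j
    proof -
      have "(l j, l (Suc j)) \<in> {(y, z). S y z}"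
      proof (rule Lim_in_closed_set[OF closed _ trivial_limit_sequentially])
        show "\<forall>\<^sub>F n in sequentially. (w (r n) j, w (r n) (Suc j)) \<in> {(y, z). S y z}"
          using eventually_long[of j] by eventually_elim (simp add: chains)
        show "((\<lambda>n. (w (r n) j, w (r n) (Suc j))) \<longlongrightarrow> (l j, l (Suc j))) sequentially"
          by (intro tendsto_Pair lim)
      qed
      then show ?thesis by simp
    qed
    show "l j = a" if "\<And>n. w n j = a" for j a
      using lim[of j] that by (simp add: LIMSEQ_const_iff)
  qed
qed

lemma bi_infinite_chain_from_rays:
  assumes "\<And>j. S (f j) (f (Suc j))" "\<And>k. S (b (Suc k)) (b k)" "b 0 = f 0"
  obtains X :: "int \<Rightarrow> 'a" where "\<And>k. S (X k) (X (k + 1))" "\<And>j. X (int j) = f j"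
proof
  define X where "X k = (if k \<ge> 0 then f (nat k) else b (nat (- k)))" for k
  show "X (int j) = f j" for j
    by (simp add: X_def)
  show "S (X k) (X (k + 1))" for k
  proof (cases "k \<ge> 0")
    case True
    then have "nat (k + 1) = Suc (nat k)" by simp
    with True show ?thesis
      using assms(1) by (simp add: X_def)
  next
    case False
    then have "nat (- k) = Suc (nat (- (k + 1)))" by simp
    with False show ?thesis
      using assms(2) assms(3)[symmetric] by (auto simp: X_def)
  qed
qed

lemma sum_atLeastLessThan_int_telescope:
  fixes f :: "int \<Rightarrow> 'a::ab_group_add"
  assumes "m \<le> n"
  shows "(\<Sum>j\<in>{m..<n}. f (j + 1) - f j) = f n - f m"
  using assms
proof (induction n rule: int_ge_induct)
  case (step i)
  have "{m..<i + 1} = insert i {m..<i}"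
    using step(1) by auto
  with step(2) show ?case by simp
qed simp

lemma calibrated_chain_action:
  assumes "\<And>k. calibrated_pair L \<tau> c u (X k) (X (k + 1))" "m \<le> n"
  shows "u (X n) - u (X m)
    = (\<Sum>j\<in>{m..<n}. Ltau L \<tau> (X j) (X (j + 1))) - real_of_int (n - m) * \<tau> * c"
proof -
  have "u (X n) - u (X m) = (\<Sum>j\<in>{m..<n}. u (X (j + 1)) - u (X j))"
    by (rule sum_atLeastLessThan_int_telescope[symmetric, OF assms(2)])
  also have "\<dots> = (\<Sum>j\<in>{m..<n}. Ltau L \<tau> (X j) (X (j + 1)) - \<tau> * c)"
  proof (rule sum.cong)
    show "u (X (j + 1)) - u (X j) = Ltau L \<tau> (X j) (X (j + 1)) - \<tau> * c" for j
      using assms(1)[of j] by (simp add: calibrated_pair_def)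
  qed simp
  also have "\<dots> = (\<Sum>j\<in>{m..<n}. Ltau L \<tau> (X j) (X (j + 1))) - real_of_int (n - m) * \<tau> * c"
    using assms(2) by (simp add: sum_subtractf)
  finally show ?thesis .
qed

lemma tonelli_calibrated_pairs:
  fixes H :: "(real ^ 'd) \<times> (real ^ 'd) \<Rightarrow> real"
  assumes "tonelli H" "\<tau> > 0" "continuous_on UNIV u" "zd_periodic u"
    and "discrete_LO_solution (lagrangian H) \<tau> c u"
  shows "closed {(y, z). calibrated_pair (lagrangian H) \<tau> c u y z}"
    and "\<exists>R. \<forall>y z. calibrated_pair (lagrangian H) \<tau> c u y z \<longrightarrow> dist y z \<le> R"
proof -
  obtain K where K: "\<And>y. \<bar>u y\<bar> \<le> K"
    using bounded_range_zd_periodic[OF assms(3,4)] by (auto simp: bounded_iff)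
  obtain M where "\<And>y p. norm p \<le> 1 \<Longrightarrow> H (y, p) \<le> M"
    using tonelli_bounded_above_on_unit_ball[OF assms(1)] by blast
  then have coercive: "\<And>y w. norm w - M \<le> lagrangian H y w"
    by (rule norm_minus_le_lagrangian[OF tonelli_superlinear[OF assms(1)]])
  have "- K \<le> u y" for y
    using K[of y] by linarith
  then have "bdd_below (range u)"
    by (intro bdd_belowI2)
  moreover have "- M \<le> lagrangian H y w" for y w
    using coercive[where y = y and w = w] norm_ge_zero[of w] by linarith
  ultimately have "u z + \<tau> * c \<le> u y + Ltau (lagrangian H) \<tau> y z" for y z
    by (intro discrete_LO_solution_dominated[OF assms(5)]) (use assms(2) in auto)
  then show "closed {(y, z). calibrated_pair (lagrangian H) \<tau> c u y z}"
    by (rule closed_calibrated_pairs[OF tonelli_superlinear tonelli_continuous, OF assms(1,1,3,2)])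
  show "\<exists>R. \<forall>y z. calibrated_pair (lagrangian H) \<tau> c u y z \<longrightarrow> dist y z \<le> R"
    using dist_le_if_calibrated_pair[where L = "lagrangian H" and u = u, OF _ K coercive assms(2)]
    by blast
qed

theorem proposition3p5:
  fixes H :: "(real ^ 'd) \<times> (real ^ 'd) \<Rightarrow> real"
    and u :: "real ^ 'd \<Rightarrow> real"
    and \<tau> c :: real
    and x v :: "real ^ 'd"
  assumes "tonelli H"
    and "\<tau> > 0"
    and "continuous_on UNIV u"
    and "zd_periodic u"
    and "discrete_LO_solution (lagrangian H) \<tau> c u"
    and "(x, v) \<in> discrete_Aubry (lagrangian H) \<tau> c u"
  shows "\<exists>xs :: int \<Rightarrow> real ^ 'd. xs 0 = x \<and> xs 1 = x + \<tau> *\<^sub>R v \<and>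
     (\<forall>m n. m < n \<longrightarrow>
        u (xs n) - u (xs m) =
          (\<Sum>j\<in>{m..<n}. Ltau (lagrangian H) \<tau> (xs j) (xs (j + 1)))
          - real_of_int (n - m) * \<tau> * c)"
proof -
  let ?S = "calibrated_pair (lagrangian H) \<tau> c u"
  obtain R where R: "\<And>y z. ?S y z \<Longrightarrow> dist y z \<le> R"
    using tonelli_calibrated_pairs(2)[OF assms(1-5)] by blast
  obtain ys where ys: "\<And>n. ys n (Suc n) = x" "\<And>n. ys n n = x + \<tau> *\<^sub>R v"
    "\<And>n k. ?S (ys n (Suc k)) (ys n k)"
    using discrete_Aubry_calibrated_configurations[OF assms(6)] assms(2) by auto
  have chains: "?S (ys n (Suc n - j)) (ys n (Suc n - Suc j))" if "j < n" for n j
    using ys(3)[of n "n - j"] that by (simp add: Suc_diff_le)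
  have start: "ys n (Suc n - 0) = x" for n
    using ys(1) by simp
  obtain l where l: "\<And>j. ?S (l j) (l (Suc j))"
    "\<And>j a. (\<And>n. ys n (Suc n - j) = a) \<Longrightarrow> l j = a"
    using infinite_chain_from_finite_chains[where w = "\<lambda>n j. ys n (Suc n - j)",
      OF tonelli_calibrated_pairs(1)[OF assms(1-5)] R chains start] by blast
  have "l 0 = x" "l 1 = x + \<tau> *\<^sub>R v"
    using l(2)[of 0 x] l(2)[of 1 "x + \<tau> *\<^sub>R v"] ys(1,2) by simp_all
  have "ys 0 (Suc 0) = l 0"
    using ys(1)[of 0] \<open>l 0 = x\<close> by simp
  with bi_infinite_chain_from_rays[of ?S l "\<lambda>k. ys 0 (Suc k)", OF l(1) ys(3)]
  obtain X where X: "\<And>k. ?S (X k) (X (k + 1))" "\<And>j. X (int j) = l j"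
    by blast
  show ?thesis
  proof (intro exI conjI allI impI)
    show "X 0 = x" "X 1 = x + \<tau> *\<^sub>R v"
      using X(2)[of 0] X(2)[of 1] \<open>l 0 = x\<close> \<open>l 1 = x + \<tau> *\<^sub>R v\<close> by simp_all
    show "u (X n) - u (X m) = (\<Sum>j\<in>{m..<n}. Ltau (lagrangian H) \<tau> (X j) (X (j + 1)))
        - real_of_int (n - m) * \<tau> * c" if "m < n" for m n
      using calibrated_chain_action[where X = X and u = u and L = "lagrangian H", OF X(1)] that
      by simp
  qed
qed

end
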